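(* Let $r\in C(0,1)$ be such that $\inf_{x\in[a,b]}r(x)>0$ for every $[a,b]\subset(0,1)$, and let $\gamma>1$. Then there exists $\delta>0$ such that $B_{r,\gamma,\delta}\ne\varnothing$.
   Context: $A_{r,\gamma}=\{q\in L_{1,loc}(0,1): q\ge0,\ \int_0^1 rq^\gamma\,dx\le1\}$. For a nonnegative $q\in C(0,1)$ with compact support in $(0,1)$, $\lambda_0(q)$ is the smallest eigenvalue of $-y''+qy=\lambda y$, $y(0)=y(1)=0$. $B_{r,\gamma,\delta}$ is the set of $q\in A_{r,\gamma}$ that are continuous on $(0,1)$ with compact support in $(0,1)$ and satisfy $\lambda_0(q)\ge\pi^2+\delta$. *)

theory Defs
  imports "HOL-Analysis.Analysis"
begin

definition loc_integrable01 :: "(real \<Rightarrow> real) \<Rightarrow> bool" where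
  "loc_integrable01 q \<longleftrightarrow>
     (\<forall>a b. 0 < a \<longrightarrow> a \<le> b \<longrightarrow> b < 1 \<longrightarrow> integrable (lebesgue_on {a..b}) q)"

definition A_set :: "(real \<Rightarrow> real) \<Rightarrow> real \<Rightarrow> (real \<Rightarrow> real) set" where
  "A_set r \<gamma> = {q. loc_integrable01 q \<and> (\<forall>x\<in>{0<..<1}. q x \<ge> 0) \<and>
      (\<integral>\<^sup>+ x\<in>{0<..<1}. ennreal (r x * q x powr \<gamma>) \<partial>lborel) \<le> 1}"

definition is_eigenvalue :: "(real \<Rightarrow> real) \<Rightarrow> real \<Rightarrow> bool" where
  "is_eigenvalue q lam \<longleftrightarrow>
     (\<exists>y y'. continuous_on {0..1} y \<and> y 0 = 0 \<and> y 1 = 0 \<and>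
        (\<exists>x\<in>{0<..<1}. y x \<noteq> 0) \<and>
        (\<forall>x\<in>{0<..<1}. (y has_real_derivative y' x) (at x) \<and>
            (y' has_real_derivative (q x * y x - lam * y x)) (at x)))"

definition lambda0 :: "(real \<Rightarrow> real) \<Rightarrow> real" where
  "lambda0 q = Inf {lam. is_eigenvalue q lam}"

definition compact_support01 :: "(real \<Rightarrow> real) \<Rightarrow> bool" where
  "compact_support01 q \<longleftrightarrow>
     (\<exists>a b. 0 < a \<and> a \<le> b \<and> b < 1 \<and> (\<forall>x\<in>{0<..<1}. x \<notin> {a..b} \<longrightarrow> q x = 0))"

definition B_set :: "(real \<Rightarrow> real) \<Rightarrow> real \<Rightarrow> real \<Rightarrow> (real \<Rightarrow> real) set" where
  "B_set r \<gamma> \<delta> = {q \<in> A_set r \<gamma>. continuous_on {0<..<1} q \<and> compact_support01 q \<and>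
      lambda0 q \<ge> pi\<^sup>2 + \<delta>}"

end

theory Submission
  imports Defs
begin

text \<open>Take \<open>m\<close> slightly above \<open>\<pi>\<close> and a potential \<open>q\<close>, bounded by an absolute constant and
  supported on an interval \<open>[a, b]\<close> around \<open>1/2\<close> of length at most \<open>m - \<pi>\<close>, for which
  \<open>-y'' + q y = m\<^sup>2 y\<close> has the explicit solution \<open>sin (m x)\<close> on \<open>[0, a]\<close>, a quartic bump on
  \<open>[a, b]\<close> and \<open>sin (m (1 - x))\<close> on \<open>[b, 1]\<close>. This solution is positive, and by Sturm comparison
  (the Wronskian with another eigenfunction vanishes at the endpoints, where \<open>q = 0\<close>) no eigenvalue
  lies below that of a positive eigenfunction, so \<open>\<lambda>\<^sub>0(q) = m\<^sup>2 > \<pi>\<^sup>2\<close>. Finally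
  \<open>\<integral> r q\<^sup>\<gamma> \<le> (sup r) 64\<^sup>\<gamma> (m - \<pi>) \<le> 1\<close> once \<open>m\<close> is close enough to \<open>\<pi>\<close>; only an upper bound
  for \<open>r\<close> on \<open>[1/4, 3/4]\<close> is needed, not its positivity.\<close>

lemma has_real_derivative_glue:
  fixes f g :: "real \<Rightarrow> real"
  assumes "(f has_real_derivative D) (at x)" "(g has_real_derivative D) (at x)" "f x = g x"
  shows "((\<lambda>t. if t \<le> x then f t else g t) has_real_derivative D) (at x)"
proof -
  let ?F = "\<lambda>t. if t \<le> x then f t else g t"
  have "((\<lambda>t. (f t - f x) / (t - x)) \<longlongrightarrow> D) (at_left x)"
    using assms(1) by (simp add: has_field_derivative_iff filterlim_at_split)
  moreover have "eventually (\<lambda>t. (f t - f x) / (t - x) = (?F t - ?F x) / (t - x)) (at_left x)"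
    using eventually_at_left_real[of "x - 1" x] by (auto elim!: eventually_mono)
  ultimately have left: "((\<lambda>t. (?F t - ?F x) / (t - x)) \<longlongrightarrow> D) (at_left x)"
    by (rule Lim_transform_eventually)
  have "((\<lambda>t. (g t - g x) / (t - x)) \<longlongrightarrow> D) (at_right x)"
    using assms(2) by (simp add: has_field_derivative_iff filterlim_at_split)
  moreover have "eventually (\<lambda>t. (g t - g x) / (t - x) = (?F t - ?F x) / (t - x)) (at_right x)"
    using eventually_at_right_real[of x "x + 1"] by (auto simp: assms(3) elim!: eventually_mono)
  ultimately have right: "((\<lambda>t. (?F t - ?F x) / (t - x)) \<longlongrightarrow> D) (at_right x)"
    by (rule Lim_transform_eventually)
  show ?thesis
    unfolding has_field_derivative_iff filterlim_at_split using left right by (rule conjI)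
qed

lemma has_real_derivative_piecewise3:
  fixes f g k f' g' k' :: "real \<Rightarrow> real"
  assumes ab: "a < b"
    and df: "\<And>x. (f has_real_derivative f' x) (at x)"
    and dg: "\<And>x. (g has_real_derivative g' x) (at x)"
    and dk: "\<And>x. (k has_real_derivative k' x) (at x)"
    and at_a: "f a = g a" "f' a = g' a" and at_b: "g b = k b" "g' b = k' b"
  shows "((\<lambda>t. if t \<le> a then f t else if t \<le> b then g t else k t) has_real_derivative
           (if x \<le> a then f' x else if x \<le> b then g' x else k' x)) (at x)"
proof -
  let ?F = "\<lambda>t. if t \<le> a then f t else if t \<le> b then g t else k t"
  have local: "(?F has_real_derivative D) (at x)"
    if "open U" "x \<in> U" "\<forall>t\<in>U. ?F t = G t" "(G has_real_derivative D) (at x)" for U G D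
  proof -
    have "eventually (\<lambda>t. ?F t = G t) (nhds x)"
      using eventually_nhds_in_open[OF that(1,2)] by eventually_elim (use that(3) in blast)
    from DERIV_cong_ev[OF refl this refl] that(4) show ?thesis by simp
  qed
  consider "x < a" | "x = a" | "a < x" "x < b" | "x = b" | "b < x" by linarith
  then show ?thesis
  proof cases
    case 1
    then show ?thesis by (intro local[of "{..<a}" f]) (auto intro: df)
  next
    case 2
    have "((\<lambda>t. if t \<le> a then f t else g t) has_real_derivative f' a) (at a)"
      using has_real_derivative_glue[OF df[of a] dg[of a, folded at_a(2)] at_a(1)] .
    with 2 ab show ?thesis by (intro local[of "{..<b}" "\<lambda>t. if t \<le> a then f t else g t"]) auto
  next
    case 3
    then show ?thesis by (intro local[of "{a<..<b}" g]) (auto intro: dg)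
  next
    case 4
    have "((\<lambda>t. if t \<le> b then g t else k t) has_real_derivative g' b) (at b)"
      using has_real_derivative_glue[OF dg[of b] dk[of b, folded at_b(2)] at_b(1)] .
    with 4 ab show ?thesis by (intro local[of "{a<..}" "\<lambda>t. if t \<le> b then g t else k t"]) auto
  next
    case 5
    with ab show ?thesis by (intro local[of "{b<..}" k]) (auto intro: dk)
  qed
qed

lemma has_real_derivative_nonneg_at_zero_left:
  fixes f :: "real \<Rightarrow> real"
  assumes "(f has_real_derivative D) (at c)" "f c = 0" "c < d" "\<forall>t\<in>{c<..<d}. f t > 0"
  shows "0 \<le> D"
proof (rule tendsto_lowerbound)
  show "((\<lambda>t. (f t - f c) / (t - c)) \<longlongrightarrow> D) (at_right c)"
    using assms(1) by (simp add: has_field_derivative_iff filterlim_at_split)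
  show "eventually (\<lambda>t. 0 \<le> (f t - f c) / (t - c)) (at_right c)"
    using eventually_at_right_real[OF assms(3)]
    by eventually_elim (use assms(2,4) in \<open>auto simp: zero_le_divide_iff less_imp_le\<close>)
qed (simp add: trivial_limit_at_right_real)

lemma has_real_derivative_nonpos_at_zero_right:
  fixes f :: "real \<Rightarrow> real"
  assumes "(f has_real_derivative D) (at d)" "f d = 0" "c < d" "\<forall>t\<in>{c<..<d}. f t > 0"
  shows "D \<le> 0"
proof (rule tendsto_upperbound)
  show "((\<lambda>t. (f t - f d) / (t - d)) \<longlongrightarrow> D) (at_left d)"
    using assms(1) by (simp add: has_field_derivative_iff filterlim_at_split)
  show "eventually (\<lambda>t. (f t - f d) / (t - d) \<le> 0) (at_left d)"
    using eventually_at_left_real[OF assms(3)]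
    by eventually_elim (use assms(2,4) in \<open>auto simp: divide_pos_neg less_imp_le\<close>)
qed (simp add: trivial_limit_at_left_real)

lemma nodal_interval:
  fixes z :: "real \<Rightarrow> real"
  assumes zc: "continuous_on {0..1} z" and z0: "z 0 = 0" and z1: "z 1 = 0"
    and x0: "0 < x0" "x0 < 1" "z x0 > 0"
  obtains c d where "0 \<le> c" "c < x0" "z c = 0" "x0 < d" "d \<le> 1" "z d = 0"
    "\<forall>t\<in>{c<..<d}. z t > 0"
proof -
  define S where "S = {t \<in> {0..x0}. z t = 0}"
  define T where "T = {t \<in> {x0..1}. z t = 0}"
  have zc': "continuous_on {0..x0} z" "continuous_on {x0..1} z"
    using zc x0 by (auto intro: continuous_on_subset)
  have "closed S" unfolding S_def by (rule continuous_closed_preimage_constant[OF zc'(1)]) auto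
  moreover have "0 \<in> S" "bdd_above S" using z0 x0 unfolding S_def by (auto intro: bdd_aboveI[of _ x0])
  ultimately have cS: "Sup S \<in> S" and Sle: "\<And>t. t \<in> S \<Longrightarrow> t \<le> Sup S"
    by (auto intro: closed_contains_Sup cSup_upper)
  have "closed T" unfolding T_def by (rule continuous_closed_preimage_constant[OF zc'(2)]) auto
  moreover have "1 \<in> T" "bdd_below T" using z1 x0 unfolding T_def by (auto intro: bdd_belowI[of _ x0])
  ultimately have dT: "Inf T \<in> T" and Tge: "\<And>t. t \<in> T \<Longrightarrow> Inf T \<le> t"
    by (auto intro: closed_contains_Inf cInf_lower)
  have c: "0 \<le> Sup S" "Sup S < x0" "z (Sup S) = 0"
    using cS x0 unfolding S_def by (auto simp: order.order_iff_strict)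
  have d: "x0 < Inf T" "Inf T \<le> 1" "z (Inf T) = 0"
    using dT x0 unfolding T_def by (auto simp: order.order_iff_strict)
  have "z t > 0" if t: "Sup S < t" "t < Inf T" for t
  proof (rule ccontr)
    assume neg: "\<not> z t > 0"
    show False
    proof (cases "t \<le> x0")
      case True
      have "continuous_on {t..x0} z" using zc'(1) c t True by (auto intro: continuous_on_subset)
      then obtain s where "t \<le> s" "s \<le> x0" "z s = 0" using IVT'[of z t 0 x0] neg x0 True by force
      then have "s \<in> S" using c t unfolding S_def by auto
      then show False using Sle \<open>t \<le> s\<close> t by force
    next
      case False
      have "continuous_on {x0..t} z" using zc'(2) d t False by (auto intro: continuous_on_subset)
      then obtain s where "x0 \<le> s" "s \<le> t" "z s = 0" using IVT2'[of z t 0 x0] neg x0 False by force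
      then have "s \<in> T" using d t unfolding T_def by auto
      then show False using Tge \<open>s \<le> t\<close> t by force
    qed
  qed
  with c d show thesis by (intro that[of "Sup S" "Inf T"]) auto
qed

lemma wronskian_tendsto_zero:
  fixes y z y' z' :: "real \<Rightarrow> real"
  assumes "(y \<longlongrightarrow> 0) F" "(z \<longlongrightarrow> 0) F"
    "eventually (\<lambda>x. \<bar>z' x\<bar> \<le> K1) F" "eventually (\<lambda>x. \<bar>y' x\<bar> \<le> K2) F"
  shows "((\<lambda>x. y x * z' x - y' x * z x) \<longlongrightarrow> 0) F"
proof (rule Lim_null_comparison)
  show "eventually (\<lambda>x. norm (y x * z' x - y' x * z x) \<le> \<bar>y x\<bar> * K1 + K2 * \<bar>z x\<bar>) F"
    using assms(3,4)
  proof eventually_elim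
    case (elim x)
    have "\<bar>y x * z' x\<bar> \<le> \<bar>y x\<bar> * K1" using elim by (simp add: abs_mult mult_left_mono)
    moreover have "\<bar>y' x * z x\<bar> \<le> K2 * \<bar>z x\<bar>" using elim by (simp add: abs_mult mult_right_mono)
    ultimately show ?case by auto
  qed
  have "((\<lambda>x. \<bar>y x\<bar>) \<longlongrightarrow> 0) F" "((\<lambda>x. \<bar>z x\<bar>) \<longlongrightarrow> 0) F"
    using assms(1,2) tendsto_rabs_zero by auto
  then show "((\<lambda>x. \<bar>y x\<bar> * K1 + K2 * \<bar>z x\<bar>) \<longlongrightarrow> 0) F"
    using tendsto_add[OF tendsto_mult_left_zero tendsto_mult_right_zero] by fastforce
qed

lemma derivative_bounded_where_potential_vanishes:
  fixes z z' q :: "real \<Rightarrow> real"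
  assumes zc: "continuous_on {0..1} z"
    and zd: "\<forall>x\<in>{0<..<1}. (z has_real_derivative z' x) (at x) \<and>
              (z' has_real_derivative (q x * z x - lam * z x)) (at x)"
    and sub: "{\<alpha><..<\<beta>} \<subseteq> {0<..<1}"
    and q0: "\<forall>x\<in>{\<alpha><..<\<beta>}. q x = 0"
  obtains K where "\<forall>x\<in>{\<alpha><..<\<beta>}. \<bar>z' x\<bar> \<le> K"
proof -
  have "compact (z ` {0..1})" by (rule compact_continuous_image[OF zc]) simp
  then obtain B where B: "\<forall>x\<in>{0..1}. \<bar>z x\<bar> \<le> B"
    using compact_imp_bounded bounded_iff by (metis image_eqI real_norm_def)
  \<comment> \<open>Where the potential vanishes, the energy of the oscillator is conserved.\<close>
  define E where "E = (\<lambda>x. (z' x)\<^sup>2 + lam * (z x)\<^sup>2)"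
  have "(E has_real_derivative 0) (at x within {\<alpha><..<\<beta>})" if x: "x \<in> {\<alpha><..<\<beta>}" for x
  proof -
    have d: "(z has_real_derivative z' x) (at x)" "(z' has_real_derivative (q x * z x - lam * z x)) (at x)"
      using zd x sub by auto
    have "(E has_real_derivative (2 * z' x * (q x * z x - lam * z x) + lam * (2 * z x * z' x))) (at x)"
      unfolding E_def by (auto intro!: derivative_eq_intros d simp: power2_eq_square)
    then show ?thesis using q0 x by (simp add: has_field_derivative_at_within algebra_simps)
  qed
  then obtain C where C: "\<forall>x\<in>{\<alpha><..<\<beta>}. E x = C"
    using has_field_derivative_zero_constant[OF convex_real_interval(8)] by blast
  have "\<bar>z' x\<bar> \<le> sqrt (\<bar>C\<bar> + \<bar>lam\<bar> * B\<^sup>2)" if x: "x \<in> {\<alpha><..<\<beta>}" for x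
  proof -
    have "\<bar>z x\<bar> \<le> B" using B x sub by auto
    then have "(z x)\<^sup>2 \<le> B\<^sup>2" by (metis abs_ge_zero power2_abs power_mono)
    then have "\<bar>lam * (z x)\<^sup>2\<bar> \<le> \<bar>lam\<bar> * B\<^sup>2" by (simp add: abs_mult mult_left_mono)
    then have "- (lam * (z x)\<^sup>2) \<le> \<bar>lam\<bar> * B\<^sup>2" by linarith
    moreover have "(z' x)\<^sup>2 = C - lam * (z x)\<^sup>2" using C x unfolding E_def by force
    ultimately have "(z' x)\<^sup>2 \<le> \<bar>C\<bar> + \<bar>lam\<bar> * B\<^sup>2" by linarith
    then show ?thesis using real_sqrt_le_mono by fastforce
  qed
  then show thesis using that by blast
qed

lemma wronskian_has_derivative:
  fixes y y' z z' :: "real \<Rightarrow> real"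
  assumes "(y has_real_derivative y' x) (at x)" "(y' has_real_derivative (q * y x - M * y x)) (at x)"
    and "(z has_real_derivative z' x) (at x)" "(z' has_real_derivative (q * z x - lam * z x)) (at x)"
  shows "((\<lambda>x. y x * z' x - y' x * z x) has_real_derivative ((M - lam) * y x * z x)) (at x)"
  by (rule DERIV_cong[OF DERIV_diff[OF DERIV_mult[OF assms(1,4)] DERIV_mult[OF assms(2,3)]]])
     (simp add: algebra_simps)

lemma one_sided_limits_less_of_strict_mono:
  fixes W :: "real \<Rightarrow> real"
  assumes "c < d" and mono: "\<And>s e. c < s \<Longrightarrow> s < e \<Longrightarrow> e < d \<Longrightarrow> W s < W e"
    and "(W \<longlongrightarrow> L) (at_right c)" "(W \<longlongrightarrow> L') (at_left d)"
  shows "L < L'"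
proof -
  define s1 where "s1 = c + (d - c)/3"
  define s2 where "s2 = c + 2*(d - c)/3"
  have s: "c < s1" "s1 < s2" "s2 < d" using \<open>c < d\<close> unfolding s1_def s2_def by (auto simp: field_simps)
  have "L \<le> W s1"
  proof (rule tendsto_upperbound[OF assms(3)])
    show "eventually (\<lambda>t. W t \<le> W s1) (at_right c)"
      using eventually_at_right_real[OF s(1)] by eventually_elim (use s in \<open>auto intro!: less_imp_le mono\<close>)
  qed (simp add: trivial_limit_at_right_real)
  moreover have "W s2 \<le> L'"
  proof (rule tendsto_lowerbound[OF assms(4)])
    show "eventually (\<lambda>t. W s2 \<le> W t) (at_left d)"
      using eventually_at_left_real[OF s(3)] by eventually_elim (use s in \<open>auto intro!: less_imp_le mono\<close>)
  qed (simp add: trivial_limit_at_left_real)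
  moreover have "W s1 < W s2" using mono s by auto
  ultimately show ?thesis by linarith
qed

lemma sturm_comparison:
  fixes y y' z z' q :: "real \<Rightarrow> real" and M lam x0 :: real
  assumes ypos: "\<forall>x\<in>{0<..<1}. y x > 0"
    and yd: "\<forall>x\<in>{0<..<1}. (y has_real_derivative y' x) (at x) \<and>
              (y' has_real_derivative (q x * y x - M * y x)) (at x)"
    and zc: "continuous_on {0..1} z" and z0: "z 0 = 0" and z1: "z 1 = 0"
    and x0: "0 < x0" "x0 < 1" "z x0 > 0"
    and zd: "\<forall>x\<in>{0<..<1}. (z has_real_derivative z' x) (at x) \<and>
              (z' has_real_derivative (q x * z x - lam * z x)) (at x)"
    and W0: "((\<lambda>x. y x * z' x - y' x * z x) \<longlongrightarrow> 0) (at_right 0)"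
    and W1: "((\<lambda>x. y x * z' x - y' x * z x) \<longlongrightarrow> 0) (at_left 1)"
  shows "M \<le> lam"
proof (rule ccontr)
  assume "\<not> M \<le> lam"
  define W where "W = (\<lambda>x. y x * z' x - y' x * z x)"
  have Wd: "(W has_real_derivative ((M - lam) * y x * z x)) (at x)" if "0 < x" "x < 1" for x
    unfolding W_def using yd zd that by (intro wronskian_has_derivative) auto
  obtain c d where c: "0 \<le> c" "c < x0" "z c = 0" and d: "x0 < d" "d \<le> 1" "z d = 0"
    and zpos: "\<forall>t\<in>{c<..<d}. z t > 0"
    by (rule nodal_interval[OF zc z0 z1 x0])
  have W_less: "W s < W e" if "c < s" "s < e" "e < d" for s e
  proof (rule DERIV_pos_imp_increasing[OF \<open>s < e\<close>])
    fix x assume "s \<le> x" "x \<le> e"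
    then have x: "c < x" "x < d" "0 < x" "x < 1" using that c d by auto
    have "(M - lam) * y x * z x > 0"
      using \<open>\<not> M \<le> lam\<close> ypos zpos x by (intro mult_pos_pos) auto
    then show "\<exists>D. (W has_real_derivative D) (at x) \<and> D > 0" using Wd[OF x(3,4)] by blast
  qed
  \<comment> \<open>At an interior zero, the sign of the Wronskian is that of the derivative of z.\<close>
  obtain Lc where Lc: "Lc \<ge> 0" "(W \<longlongrightarrow> Lc) (at_right c)"
  proof (cases "c = 0")
    case True then show ?thesis using that W0 unfolding W_def by auto
  next
    case False
    then have c01: "0 < c" "c < 1" using c x0 by auto
    have "isCont W c" using Wd[OF c01] by (rule DERIV_isCont)
    then have "(W \<longlongrightarrow> W c) (at_right c)" by (simp add: isCont_def filterlim_at_split)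
    moreover have "z' c \<ge> 0"
      using has_real_derivative_nonneg_at_zero_left[of z "z' c" c d] zd c01 c d zpos by auto
    then have "W c \<ge> 0" unfolding W_def using ypos[rule_format, of c] c01 c by simp
    ultimately show ?thesis using that by blast
  qed
  obtain Ld where Ld: "Ld \<le> 0" "(W \<longlongrightarrow> Ld) (at_left d)"
  proof (cases "d = 1")
    case True then show ?thesis using that W1 unfolding W_def by auto
  next
    case False
    then have d01: "0 < d" "d < 1" using d x0 by auto
    have "isCont W d" using Wd[OF d01] by (rule DERIV_isCont)
    then have "(W \<longlongrightarrow> W d) (at_left d)" by (simp add: isCont_def filterlim_at_split)
    moreover have "z' d \<le> 0"
      using has_real_derivative_nonpos_at_zero_right[of z "z' d" d c] zd d01 c d zpos by auto
    then have "W d \<le> 0" unfolding W_def using ypos[rule_format, of d] d01 d by (simp add: mult_nonneg_nonpos)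
    ultimately show ?thesis using that by blast
  qed
  have "Lc < Ld" by (rule one_sided_limits_less_of_strict_mono[OF _ W_less Lc(2) Ld(2)]) (use c d in auto)
  with Lc Ld show False by linarith
qed

lemma is_eigenvalue_obtain_positive:
  assumes "is_eigenvalue q lam"
  obtains z z' x0 where "continuous_on {0..1} z" "z 0 = 0" "z 1 = 0" "0 < x0" "x0 < 1" "z x0 > 0"
    "\<forall>x\<in>{0<..<1}. (z has_real_derivative z' x) (at x) \<and>
        (z' has_real_derivative (q x * z x - lam * z x)) (at x)"
proof -
  from assms obtain z z' x0 where zc: "continuous_on {0..1} z" and z01: "z 0 = 0" "z 1 = 0"
    and x0: "0 < x0" "x0 < 1" "z x0 \<noteq> 0"
    and zd: "\<forall>x\<in>{0<..<1}. (z has_real_derivative z' x) (at x) \<and>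
        (z' has_real_derivative (q x * z x - lam * z x)) (at x)"
    unfolding is_eigenvalue_def by auto
  show thesis
  proof (cases "z x0 > 0")
    case True
    then show ?thesis using that[OF zc z01 x0(1,2) _ zd] by blast
  next
    case False
    have "\<forall>x\<in>{0<..<1}. ((\<lambda>x. - z x) has_real_derivative - z' x) (at x) \<and>
        ((\<lambda>x. - z' x) has_real_derivative (q x * - z x - lam * - z x)) (at x)"
      using zd by (auto intro!: derivative_eq_intros)
    moreover have "continuous_on {0..1} (\<lambda>x. - z x)" using zc by (intro continuous_intros)
    ultimately show ?thesis using that[of "\<lambda>x. - z x" x0 "\<lambda>x. - z' x"] z01 x0 False by auto
  qed
qed

lemma eigenvalue_ge_of_positive_solution:
  fixes q y y' :: "real \<Rightarrow> real" and M a b K lam :: real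
  assumes ab: "0 < a" "a < b" "b < 1"
    and q0: "\<forall>x. x \<le> a \<or> b \<le> x \<longrightarrow> q x = 0"
    and yd: "\<forall>x. (y has_real_derivative y' x) (at x) \<and>
              (y' has_real_derivative (q x * y x - M * y x)) (at x)"
    and y0: "y 0 = 0" and y1: "y 1 = 0" and ypos: "\<forall>x\<in>{0<..<1}. y x > 0"
    and y'b: "\<forall>x. x \<le> a \<or> b \<le> x \<longrightarrow> \<bar>y' x\<bar> \<le> K"
    and eig: "is_eigenvalue q lam"
  shows "M \<le> lam"
proof -
  obtain z z' x0 where zc: "continuous_on {0..1} z" and z0: "z 0 = 0" and z1: "z 1 = 0"
    and x0: "0 < x0" "x0 < 1" "z x0 > 0"
    and zd: "\<forall>x\<in>{0<..<1}. (z has_real_derivative z' x) (at x) \<and>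
        (z' has_real_derivative (q x * z x - lam * z x)) (at x)"
    by (rule is_eigenvalue_obtain_positive[OF eig])
  have "{0<..<a} \<subseteq> {0<..<1}" "\<forall>x\<in>{0<..<a}. q x = 0"
    and "{b<..<1} \<subseteq> {0<..<1}" "\<forall>x\<in>{b<..<1}. q x = 0"
    using ab q0 by auto
  then obtain K0 K1 where K0: "\<forall>x\<in>{0<..<a}. \<bar>z' x\<bar> \<le> K0"
    and K1: "\<forall>x\<in>{b<..<1}. \<bar>z' x\<bar> \<le> K1"
    using derivative_bounded_where_potential_vanishes[OF zc zd] by metis
  have "isCont y 0" "isCont y 1" using yd DERIV_isCont by blast+
  then have y_lim: "(y \<longlongrightarrow> 0) (at_right 0)" "(y \<longlongrightarrow> 0) (at_left 1)"
    using y0 y1 by (simp_all add: isCont_def filterlim_at_split)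
  have "(z \<longlongrightarrow> z 0) (at 0 within {0..1})" "(z \<longlongrightarrow> z 1) (at 1 within {0..1})"
    using zc by (simp_all add: continuous_on_def)
  then have z_lim: "(z \<longlongrightarrow> 0) (at_right 0)" "(z \<longlongrightarrow> 0) (at_left 1)"
    using z0 z1 at_within_Icc_at_right[of "0::real" 1] at_within_Icc_at_left[of "0::real" 1] by simp_all
  have near0: "eventually (\<lambda>x. x \<in> {0<..<a}) (at_right 0)"
    and near1: "eventually (\<lambda>x. x \<in> {b<..<1}) (at_left 1)"
    using ab eventually_at_right_real[of 0 a] eventually_at_left_real[of b 1] by auto
  show ?thesis
  proof (rule sturm_comparison[OF ypos _ zc z0 z1 x0 zd])
    show "\<forall>x\<in>{0<..<1}. (y has_real_derivative y' x) (at x) \<and>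
        (y' has_real_derivative (q x * y x - M * y x)) (at x)" using yd by blast
    show "((\<lambda>x. y x * z' x - y' x * z x) \<longlongrightarrow> 0) (at_right 0)"
    proof (rule wronskian_tendsto_zero[OF y_lim(1) z_lim(1)])
      show "eventually (\<lambda>x. \<bar>z' x\<bar> \<le> K0) (at_right 0)"
        using near0 by (rule eventually_mono) (use K0 in auto)
      show "eventually (\<lambda>x. \<bar>y' x\<bar> \<le> K) (at_right 0)"
        using near0 by (rule eventually_mono) (use y'b in auto)
    qed
    show "((\<lambda>x. y x * z' x - y' x * z x) \<longlongrightarrow> 0) (at_left 1)"
    proof (rule wronskian_tendsto_zero[OF y_lim(2) z_lim(2)])
      show "eventually (\<lambda>x. \<bar>z' x\<bar> \<le> K1) (at_left 1)"
        using near1 by (rule eventually_mono) (use K1 in auto)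
      show "eventually (\<lambda>x. \<bar>y' x\<bar> \<le> K) (at_left 1)"
        using near1 by (rule eventually_mono) (use y'b in auto)
    qed
  qed
qed

lemma nn_integral_weighted_powr_le:
  fixes r q :: "real \<Rightarrow> real"
  assumes "a \<le> b" "0 \<le> R" "0 \<le> \<gamma>"
    and r: "\<forall>x\<in>{a..b}. r x \<le> R"
    and q: "\<forall>x. 0 \<le> q x \<and> q x \<le> Q" and q0: "\<forall>x. x \<notin> {a..b} \<longrightarrow> q x = 0"
  shows "(\<integral>\<^sup>+ x\<in>S. ennreal (r x * q x powr \<gamma>) \<partial>lborel) \<le> ennreal (R * Q powr \<gamma> * (b - a))"
proof -
  have "ennreal (r x * q x powr \<gamma>) * indicator S x \<le> ennreal (R * Q powr \<gamma>) * indicator {a..b} x" for x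
  proof (cases "x \<in> {a..b}")
    case True
    have "q x powr \<gamma> \<le> Q powr \<gamma>" using q \<open>0 \<le> \<gamma>\<close> by (intro powr_mono2) auto
    then have "r x * q x powr \<gamma> \<le> R * Q powr \<gamma>"
      using r True \<open>0 \<le> R\<close> by (intro mult_mono) auto
    then show ?thesis using True by (auto simp: indicator_def intro: ennreal_leI)
  qed (use q0 in simp)
  then have "(\<integral>\<^sup>+ x\<in>S. ennreal (r x * q x powr \<gamma>) \<partial>lborel)
      \<le> (\<integral>\<^sup>+ x. ennreal (R * Q powr \<gamma>) * indicator {a..b} x \<partial>lborel)"
    by (intro nn_integral_mono)
  also have "\<dots> = ennreal (R * Q powr \<gamma> * (b - a))"
    using assms(1,2) by (simp add: nn_integral_cmult_indicator ennreal_mult)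
  finally show ?thesis .
qed

locale bump_potential =
  fixes m :: real
  assumes pi_less: "pi < m" and le_pi_plus_half: "m \<le> pi + 1/2"
begin

definition h :: real where "h = (m - pi) / (2 * m)"
definition a :: real where "a = pi / (2 * m)"
definition b :: real where "b = 1 - a"

text \<open>On \<open>[a, b]\<close> the eigenfunction is a quartic bump in \<open>u = x - 1/2\<close>. At \<open>u = \<plusminus>h\<close> it
  agrees with \<open>sin (m x)\<close> resp. \<open>sin (m (1 - x))\<close> up to second order (value 1, slope 0,
  curvature \<open>-m\<^sup>2\<close>), so the potential \<open>(y'' + m\<^sup>2 y) / y\<close> it forces vanishes at the junctions.\<close>

definition bump :: "real \<Rightarrow> real" where
  "bump u = 1 - m\<^sup>2 * h\<^sup>2 * (1 - u\<^sup>2 / h\<^sup>2)\<^sup>2 / 8"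
definition bump' :: "real \<Rightarrow> real" where
  "bump' u = m\<^sup>2 * u * (1 - u\<^sup>2 / h\<^sup>2) / 2"
definition bump'' :: "real \<Rightarrow> real" where
  "bump'' u = m\<^sup>2 * (1 - 3 * u\<^sup>2 / h\<^sup>2) / 2"

definition bump_potential_at :: "real \<Rightarrow> real" where
  "bump_potential_at u = (bump'' u + m\<^sup>2 * bump u) / bump u"

definition potential :: "real \<Rightarrow> real" where
  "potential x = bump_potential_at (max (-h) (min h (x - 1/2)))"

definition eigenfun :: "real \<Rightarrow> real" where
  "eigenfun x = (if x \<le> a then sin (m * x) else if x \<le> b then bump (x - 1/2) else sin (m * (1 - x)))"
definition eigenfun' :: "real \<Rightarrow> real" where
  "eigenfun' x = (if x \<le> a then m * cos (m * x) else if x \<le> b then bump' (x - 1/2)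
     else - m * cos (m * (1 - x)))"
definition eigenfun'' :: "real \<Rightarrow> real" where
  "eigenfun'' x = (if x \<le> a then - m\<^sup>2 * sin (m * x) else if x \<le> b then bump'' (x - 1/2)
     else - m\<^sup>2 * sin (m * (1 - x)))"

lemma m_pos: "0 < m"
  using pi_less pi_gt_zero by linarith

lemma h_pos: "0 < h"
  unfolding h_def using pi_less m_pos by simp

lemma h_nonzero: "h \<noteq> 0"
  using h_pos by simp

lemma m_mult_h_le: "m * h \<le> 1/4"
proof -
  have "m * h = (m - pi) / 2" unfolding h_def using m_pos by simp
  then show ?thesis using le_pi_plus_half by argo
qed

lemma a_sub_half: "a - 1/2 = - h" and b_sub_half: "b - 1/2 = h"
  unfolding a_def b_def h_def using m_pos by (simp_all add: field_simps)

lemma m_mult_a: "m * a = pi / 2" and m_mult_1_sub_b: "m * (1 - b) = pi / 2"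
  unfolding b_def a_def using m_pos by simp_all

lemma a_pos: "0 < a"
  unfolding a_def using m_pos by simp

lemma a_less_b: "a < b" and b_less_1: "b < 1"
  using a_sub_half b_sub_half h_pos a_pos unfolding b_def by linarith+

lemma quarter_le_a: "1/4 \<le> a" and b_le_three_quarters: "b \<le> 3/4"
  unfolding b_def a_def using m_pos le_pi_plus_half pi_gt3 by (simp_all add: field_simps)

lemma b_sub_a_le: "b - a \<le> m - pi"
proof -
  have "b - a = (m - pi) / m" unfolding b_def a_def using m_pos by (simp add: field_simps)
  also have "\<dots> \<le> m - pi"
    using pi_less pi_gt3 mult_left_mono[of 1 m "m - pi"] by (simp add: pos_divide_le_eq m_pos)
  finally show ?thesis .
qed

lemma bump_bounds:
  assumes "\<bar>u\<bar> \<le> h"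
  shows "1/2 \<le> bump u" "0 \<le> bump'' u + m\<^sup>2 * bump u" "bump'' u + m\<^sup>2 * bump u \<le> 3 * m\<^sup>2 / 2"
proof -
  define v where "v = u\<^sup>2 / h\<^sup>2"
  define k where "k = m\<^sup>2 * h\<^sup>2"
  have "u\<^sup>2 \<le> h\<^sup>2" using assms h_pos by (metis abs_le_square_iff abs_of_pos)
  then have v: "0 \<le> 1 - v" "1 - v \<le> 1" unfolding v_def using h_pos by simp_all
  have "k = (m * h)\<^sup>2" unfolding k_def by (simp add: power_mult_distrib)
  also have "\<dots> \<le> (1/4)\<^sup>2" using m_mult_h_le m_pos h_pos by (intro power_mono) auto
  finally have k: "0 \<le> k" "k \<le> 1/16" unfolding k_def by (simp_all add: power2_eq_square)
  have kv: "0 \<le> k * (1 - v)" "k * (1 - v) \<le> 1/16"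
    using k v mult_mono[of k "1/16" "1 - v" 1] by auto
  have bump_eq: "bump u = 1 - k * (1 - v) * (1 - v) / 8"
    unfolding bump_def k_def v_def by (simp add: power2_eq_square)
  have "k * (1 - v) * (1 - v) \<le> 1/16 * 1" using v kv by (intro mult_mono) auto
  then show "1/2 \<le> bump u" unfolding bump_eq by linarith
  have eq: "bump'' u + m\<^sup>2 * bump u = m\<^sup>2 * (1 - v) * (3/2 - k * (1 - v) / 8)"
    unfolding bump''_def bump_def v_def k_def using h_pos by (simp add: field_simps power2_eq_square)
  have w: "0 \<le> 3/2 - k * (1 - v) / 8" "3/2 - k * (1 - v) / 8 \<le> 3/2" using kv by auto
  show "0 \<le> bump'' u + m\<^sup>2 * bump u" unfolding eq using v w by simp
  have "m\<^sup>2 * (1 - v) * (3/2 - k * (1 - v) / 8) \<le> m\<^sup>2 * 1 * (3/2)"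
    using v w by (intro mult_mono) auto
  then show "bump'' u + m\<^sup>2 * bump u \<le> 3 * m\<^sup>2 / 2" unfolding eq by simp
qed

lemma bump_potential_at_bounds:
  assumes "\<bar>u\<bar> \<le> h"
  shows "0 \<le> bump_potential_at u" "bump_potential_at u \<le> 3 * m\<^sup>2"
proof -
  note bds = bump_bounds[OF assms]
  then have "bump_potential_at u \<le> (3 * m\<^sup>2 / 2) / (1/2)"
    unfolding bump_potential_at_def by (intro frac_le) auto
  then show "bump_potential_at u \<le> 3 * m\<^sup>2" by simp
  show "0 \<le> bump_potential_at u" unfolding bump_potential_at_def using bds by simp
qed

lemma potential_bounds: "0 \<le> potential x" "potential x \<le> 64"
proof -
  have "\<bar>max (-h) (min h (x - 1/2))\<bar> \<le> h" using h_pos by auto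
  note bds = bump_potential_at_bounds[OF this]
  have "m \<le> 9/2" using le_pi_plus_half pi_less_4 by linarith
  then have "3 * m\<^sup>2 \<le> 3 * (9/2)\<^sup>2" using m_pos by (intro mult_left_mono power_mono) auto
  then show "0 \<le> potential x" "potential x \<le> 64"
    using bds unfolding potential_def by (auto simp: power2_eq_square)
qed

lemma potential_eq_0: "x \<le> a \<or> b \<le> x \<Longrightarrow> potential x = 0"
proof -
  assume "x \<le> a \<or> b \<le> x"
  then have "max (-h) (min h (x - 1/2)) = -h \<or> max (-h) (min h (x - 1/2)) = h"
    using a_sub_half b_sub_half h_pos by auto
  then show "potential x = 0"
    unfolding potential_def bump_potential_at_def bump_def bump''_def using h_pos by auto
qed

lemma continuous_potential: "continuous_on UNIV potential"
  unfolding potential_def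
proof (rule continuous_on_compose2[of "{-h..h}" bump_potential_at])
  have "bump u \<noteq> 0" if "u \<in> {-h..h}" for u
    using bump_bounds(1)[of u] that by (auto simp: abs_le_iff)
  then show "continuous_on {-h..h} bump_potential_at"
    unfolding bump_potential_at_def bump_def bump''_def
    by (intro continuous_intros) (use h_pos in auto)
qed (use h_pos in \<open>auto intro!: continuous_intros\<close>)

lemma eigenfun_has_derivative: "(eigenfun has_real_derivative eigenfun' x) (at x)"
  unfolding eigenfun_def eigenfun'_def
proof (rule has_real_derivative_piecewise3[OF a_less_b])
  show "((\<lambda>t. bump (t - 1/2)) has_real_derivative bump' (t - 1/2)) (at t)" for t
    unfolding bump_def bump'_def using h_pos
    by (auto intro!: derivative_eq_intros simp: field_simps power2_eq_square)
qed (auto intro!: derivative_eq_intros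
      simp: m_mult_a m_mult_1_sub_b a_sub_half b_sub_half bump_def bump'_def h_pos)

lemma eigenfun'_has_derivative: "(eigenfun' has_real_derivative eigenfun'' x) (at x)"
  unfolding eigenfun'_def eigenfun''_def
proof (rule has_real_derivative_piecewise3[OF a_less_b])
  show "((\<lambda>t. bump' (t - 1/2)) has_real_derivative bump'' (t - 1/2)) (at t)" for t
    unfolding bump'_def bump''_def using h_pos
    by (auto intro!: derivative_eq_intros simp: field_simps power2_eq_square)
qed (auto intro!: derivative_eq_intros
      simp: m_mult_a m_mult_1_sub_b a_sub_half b_sub_half bump'_def bump''_def h_nonzero power2_eq_square)

lemma eigenfun''_eq: "eigenfun'' x = potential x * eigenfun x - m\<^sup>2 * eigenfun x"
proof (cases "a < x \<and> x \<le> b")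
  case True
  then have u: "\<bar>x - 1/2\<bar> \<le> h" "max (-h) (min h (x - 1/2)) = x - 1/2"
    using a_sub_half b_sub_half by auto
  have "bump (x - 1/2) \<noteq> 0" using bump_bounds(1)[OF u(1)] by linarith
  then have "bump_potential_at (x - 1/2) * bump (x - 1/2) - m\<^sup>2 * bump (x - 1/2) = bump'' (x - 1/2)"
    unfolding bump_potential_at_def by simp
  then show ?thesis using True u(2) unfolding eigenfun''_def eigenfun_def potential_def by simp
next
  case False
  then show ?thesis using potential_eq_0[of x] a_less_b unfolding eigenfun''_def eigenfun_def by auto
qed

lemma eigenfun_0: "eigenfun 0 = 0" and eigenfun_1: "eigenfun 1 = 0"
  unfolding eigenfun_def using a_pos a_less_b b_less_1 by simp_all

lemma eigenfun_pos:
  assumes "0 < x" "x < 1"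
  shows "0 < eigenfun x"
proof -
  consider "x \<le> a" | "a < x" "x \<le> b" | "b < x" by linarith
  then show ?thesis
  proof cases
    case 1
    have "m * x \<le> pi / 2" using 1 m_pos m_mult_a by (metis mult_left_mono less_imp_le)
    moreover have "0 < m * x" using assms m_pos by simp
    ultimately have "0 < m * x" "m * x < pi" using pi_gt_zero by linarith+
    then show ?thesis unfolding eigenfun_def using 1 by (simp add: sin_gt_zero)
  next
    case 2
    then have "\<bar>x - 1/2\<bar> \<le> h" using a_sub_half b_sub_half by auto
    then show ?thesis using bump_bounds(1) 2 unfolding eigenfun_def by fastforce
  next
    case 3
    have "m * (1 - x) \<le> pi / 2" using 3 m_pos m_mult_1_sub_b by (metis mult_left_mono less_imp_le diff_left_mono)
    moreover have "0 < m * (1 - x)" using assms m_pos by simp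
    ultimately have "0 < m * (1 - x)" "m * (1 - x) < pi" using pi_gt_zero by linarith+
    then show ?thesis unfolding eigenfun_def using 3 a_less_b by (simp add: sin_gt_zero)
  qed
qed

lemma abs_eigenfun'_le: "x \<le> a \<or> b \<le> x \<Longrightarrow> \<bar>eigenfun' x\<bar> \<le> m"
  unfolding eigenfun'_def using m_pos a_less_b b_sub_half
  by (auto simp: abs_mult bump'_def h_pos)

lemma is_eigenvalue_potential: "is_eigenvalue potential (m\<^sup>2)"
  unfolding is_eigenvalue_def
proof (intro exI conjI)
  show "continuous_on {0..1} eigenfun"
    using eigenfun_has_derivative by (intro continuous_at_imp_continuous_on) (blast intro: DERIV_isCont)
  show "eigenfun 0 = 0" "eigenfun 1 = 0" by (fact eigenfun_0, fact eigenfun_1)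
  have "0 < eigenfun (1/2)" by (rule eigenfun_pos) simp_all
  then show "\<exists>x\<in>{0<..<1}. eigenfun x \<noteq> 0" by (intro bexI[of _ "1/2"]) auto
  show "\<forall>x\<in>{0<..<1}. (eigenfun has_real_derivative eigenfun' x) (at x) \<and>
      (eigenfun' has_real_derivative (potential x * eigenfun x - m\<^sup>2 * eigenfun x)) (at x)"
    using eigenfun_has_derivative eigenfun'_has_derivative by (simp add: eigenfun''_eq)
qed

lemma lambda0_potential: "lambda0 potential = m\<^sup>2"
  unfolding lambda0_def
proof (rule cInf_eq_minimum)
  show "m\<^sup>2 \<in> {lam. is_eigenvalue potential lam}" using is_eigenvalue_potential by simp
next
  fix lam assume "lam \<in> {lam. is_eigenvalue potential lam}"
  then show "m\<^sup>2 \<le> lam"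
    using eigenvalue_ge_of_positive_solution[OF a_pos a_less_b b_less_1 _ _ eigenfun_0 eigenfun_1]
      potential_eq_0 eigenfun_has_derivative eigenfun'_has_derivative eigenfun''_eq eigenfun_pos
      abs_eigenfun'_le
    by (metis greaterThanLessThan_iff mem_Collect_eq)
qed

lemma potential_mem_B_set:
  fixes r :: "real \<Rightarrow> real"
  assumes "0 \<le> R" "\<forall>x\<in>{1/4..3/4}. r x \<le> R" "0 \<le> \<gamma>" "R * 64 powr \<gamma> * (m - pi) \<le> 1"
  shows "potential \<in> B_set r \<gamma> (m\<^sup>2 - pi\<^sup>2)"
  unfolding B_set_def A_set_def
proof (intro CollectI conjI)
  show "loc_integrable01 potential" unfolding loc_integrable01_def
    by (intro allI impI continuous_imp_integrable_real continuous_on_subset[OF continuous_potential])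
      auto
  show "\<forall>x\<in>{0<..<1}. 0 \<le> potential x" using potential_bounds by simp
  have "(\<integral>\<^sup>+ x\<in>{0<..<1}. ennreal (r x * potential x powr \<gamma>) \<partial>lborel)
      \<le> ennreal (R * 64 powr \<gamma> * (b - a))"
    using assms(1-3) quarter_le_a b_le_three_quarters a_less_b potential_bounds potential_eq_0
    by (intro nn_integral_weighted_powr_le) auto
  also have "\<dots> \<le> 1"
    using mult_left_mono[OF b_sub_a_le, of "R * 64 powr \<gamma>"] assms(1,4) by (simp add: ennreal_leI)
  finally show "(\<integral>\<^sup>+ x\<in>{0<..<1}. ennreal (r x * potential x powr \<gamma>) \<partial>lborel) \<le> 1" .
  show "continuous_on {0<..<1} potential" using continuous_potential by (rule continuous_on_subset) auto
  show "compact_support01 potential" unfolding compact_support01_def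
    using a_pos a_less_b b_less_1 potential_eq_0 by (intro exI[of _ a] exI[of _ b]) auto
  show "pi\<^sup>2 + (m\<^sup>2 - pi\<^sup>2) \<le> lambda0 potential" by (simp add: lambda0_potential)
qed

end

theorem mainTheorem14:
  fixes r :: "real \<Rightarrow> real" and \<gamma> :: real
  assumes "continuous_on {0<..<1} r"
    and "\<forall>a b. 0 < a \<longrightarrow> a \<le> b \<longrightarrow> b < 1 \<longrightarrow> Inf (r ` {a..b}) > 0"
    and "\<gamma> > 1"
  shows "\<exists>\<delta>>0. B_set r \<gamma> \<delta> \<noteq> {}"
proof -
  have "continuous_on {1/4..3/4} r" using assms(1) by (rule continuous_on_subset) auto
  then obtain x where "\<forall>y\<in>{1/4..3/4}. r y \<le> r x"
    using continuous_attains_sup[of "{1/4..3/4}" r] by auto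
  then obtain R where R: "0 \<le> R" "\<forall>y\<in>{1/4..3/4}. r y \<le> R"
    by (metis max.cobounded1 max.coboundedI2)
  define C where "C = R * 64 powr \<gamma>"
  have "0 \<le> C" unfolding C_def using R by simp
  define m where "m = pi + min (1/2) (1 / (C + 1))"
  interpret bump_potential m
    by unfold_locales (use \<open>0 \<le> C\<close> in \<open>simp_all add: m_def\<close>)
  have "C * (m - pi) \<le> C * (1 / (C + 1))"
    unfolding m_def using \<open>0 \<le> C\<close> by (intro mult_left_mono) auto
  also have "\<dots> \<le> 1" using \<open>0 \<le> C\<close> by (simp add: field_simps)
  finally have "R * 64 powr \<gamma> * (m - pi) \<le> 1" unfolding C_def .
  then have "potential \<in> B_set r \<gamma> (m\<^sup>2 - pi\<^sup>2)"
    using potential_mem_B_set[OF R] assms(3) by simp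
  moreover have "0 < m\<^sup>2 - pi\<^sup>2" using pi_less pi_gt_zero by (simp add: power_strict_mono)
  ultimately show ?thesis by blast
qed

end
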